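(* Let $n\ge 1$ and $m\ge 2$ both be odd. Then $L_m(n)=0$.
   Context: The Ducci function $D:\mathbb{Z}_m^n\to\mathbb{Z}_m^n$ is $D(x_1,\dots,x_n)=(x_1+x_2,\,x_2+x_3,\,\dots,\,x_{n-1}+x_n,\,x_n+x_1)$, entries mod $m$. For $\mathbf{u}\in\mathbb{Z}_m^n$, $\mathrm{Len}(\mathbf{u})$ is the smallest $l\ge 0$ such that $D^{l+k}(\mathbf{u})=D^l(\mathbf{u})$ for some $k\ge 1$. $L_m(n)=\mathrm{Len}(0,0,\dots,0,1)$. *)

theory Defs
  imports Main
begin

text \<open>Tuples in Z_m^n are lists of length n with entries in {0..<m} (integers mod m).
  Entry i (0-based) of D(x) is x_i + x_{i+1} (indices cyclic), reduced mod m.\<close>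

definition ducci :: "int \<Rightarrow> int list \<Rightarrow> int list" where
  "ducci m xs = map (\<lambda>i. (xs ! i + xs ! ((i + 1) mod length xs)) mod m) [0..<length xs]"

definition Len :: "int \<Rightarrow> int list \<Rightarrow> nat" where
  "Len m u = (LEAST l. \<exists>k\<ge>1. (ducci m ^^ (l + k)) u = (ducci m ^^ l) u)"

definition L :: "int \<Rightarrow> nat \<Rightarrow> nat" where
  "L m n = Len m (replicate (n - 1) 0 @ [1])"

end

theory Submission
  imports Defs
begin

text \<open>Over an odd modulus and for odd length, \<open>D\<close> is injective: if \<open>D x = D y\<close>, the
  differences \<open>d\<^sub>i = x\<^sub>i - y\<^sub>i\<close> satisfy \<open>d\<^sub>i \<equiv> -d\<^sub>i\<^sub>+\<^sub>1\<close>, and going once around the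
  odd cycle gives \<open>d\<^sub>i \<equiv> -d\<^sub>i\<close>, i.e. \<open>m\<close> divides \<open>2 d\<^sub>i\<close>, hence \<open>d\<^sub>i\<close>.
  An injective self-map of the finite set \<open>\<int>\<^sub>m\<^sup>n\<close> is a permutation, so every tuple,
  in particular \<open>(0,\<dots>,0,1)\<close>, lies on a cycle of \<open>D\<close>.\<close>

definition tuples :: "int \<Rightarrow> nat \<Rightarrow> int list set" where
  "tuples m n = {xs. set xs \<subseteq> {0..<m} \<and> length xs = n}"

lemma finite_tuples: "finite (tuples m n)"
  unfolding tuples_def by (rule finite_lists_length_eq) simp

lemma nth_ducci:
  "i < length xs \<Longrightarrow> ducci m xs ! i = (xs ! i + xs ! ((i + 1) mod length xs)) mod m"
  by (simp add: ducci_def)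

lemma ducci_in_tuples:
  assumes "m > 0" "xs \<in> tuples m n"
  shows "ducci m xs \<in> tuples m n"
  using assms by (auto simp: tuples_def ducci_def)

lemma dvd_alternating_cyclic:
  fixes d :: "nat \<Rightarrow> int"
  assumes "i < n" and adj: "\<And>i. i < n \<Longrightarrow> m dvd d i + d ((i + 1) mod n)"
  shows "m dvd d i - (-1) ^ j * d ((i + j) mod n)"
proof (induction j)
  case 0
  show ?case using \<open>i < n\<close> by simp
next
  case (Suc j)
  define b where "b = (i + j) mod n"
  have "b < n" using \<open>i < n\<close> by (simp add: b_def)
  have "d i - (-1) ^ Suc j * d ((b + 1) mod n)
      = (d i - (-1) ^ j * d b) + (-1) ^ j * (d b + d ((b + 1) mod n))"
    by (simp add: algebra_simps)
  moreover have "m dvd (d i - (-1) ^ j * d b) + (-1) ^ j * (d b + d ((b + 1) mod n))"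
    using Suc.IH adj[OF \<open>b < n\<close>] by (simp add: b_def)
  moreover have "(b + 1) mod n = (i + Suc j) mod n"
    by (simp add: b_def mod_Suc_eq)
  ultimately show ?case by metis
qed

lemma dvd_double_odd_cycle:
  fixes d :: "nat \<Rightarrow> int"
  assumes "odd n" "i < n" "\<And>i. i < n \<Longrightarrow> m dvd d i + d ((i + 1) mod n)"
  shows "m dvd 2 * d i"
  using dvd_alternating_cyclic[of i n m d n] assms by simp

lemma inj_on_ducci_tuples:
  assumes "odd m" "odd n"
  shows "inj_on (ducci m) (tuples m n)"
proof (rule inj_onI)
  fix x y assume x: "x \<in> tuples m n" and y: "y \<in> tuples m n" and eq: "ducci m x = ducci m y"
  define d where "d i = x ! i - y ! i" for i
  have adj: "m dvd d i + d ((i + 1) mod n)" if "i < n" for i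
  proof -
    have "(x ! i + x ! ((i + 1) mod n)) mod m = (y ! i + y ! ((i + 1) mod n)) mod m"
      using arg_cong[OF eq, of "\<lambda>zs. zs ! i"] that x y by (simp add: nth_ducci tuples_def)
    then show ?thesis by (simp add: mod_eq_dvd_iff d_def algebra_simps)
  qed
  have "x ! i = y ! i" if "i < n" for i
  proof -
    have "x ! i \<in> set x" "y ! i \<in> set y"
      using x y that by (simp_all add: tuples_def)
    then have range: "x ! i \<in> {0..<m}" "y ! i \<in> {0..<m}"
      using x y by (auto simp: tuples_def)
    have "coprime m 2" using \<open>odd m\<close> by simp
    then have "m dvd d i"
      using dvd_double_odd_cycle[of n i m d] \<open>odd n\<close> that adj coprime_dvd_mult_right_iff by blast
    with range show ?thesis
      by (metis d_def mod_eq_dvd_iff mod_pos_pos_trivial atLeastLessThan_iff)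
  qed
  then show "x = y" using x y by (simp add: tuples_def nth_equalityI)
qed

text \<open>Extending \<open>f\<close> by the identity outside \<open>A\<close> gives a globally injective map with
  the same orbit through \<open>x\<close>, to which \<open>funpow_inj_finite\<close> applies.\<close>

lemma inj_on_self_map_periodic:
  assumes "finite A" "inj_on f A" "f ` A \<subseteq> A" "x \<in> A"
  obtains k where "k > 0" "(f ^^ k) x = x"
proof -
  define p where "p y = (if y \<in> A then f y else y)" for y
  have "inj p"
    using assms(2,3) by (auto simp: p_def inj_on_def split: if_splits)
  have f_orbit: "(f ^^ k) x \<in> A" for k
    by (induction k) (use assms(3,4) in auto)
  have p_orbit: "(p ^^ k) x = (f ^^ k) x" for k
    by (induction k) (use f_orbit in \<open>auto simp: p_def\<close>)
  have "finite {y. \<exists>k. y = (p ^^ k) x}"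
    unfolding p_orbit using f_orbit by (intro finite_subset[OF _ \<open>finite A\<close>]) auto
  then obtain k where "k > 0" "(p ^^ k) x = x"
    using funpow_inj_finite[OF \<open>inj p\<close>] by blast
  then show thesis using that p_orbit by metis
qed

lemma Len_eq_0_if_periodic:
  assumes "k \<ge> 1" "(ducci m ^^ k) u = u"
  shows "Len m u = 0"
  unfolding Len_def by (rule Least_eq_0) (use assms in auto)

theorem theorem2p2:
  fixes m :: int and n :: nat
  assumes "n \<ge> 1" and "odd n" and "m \<ge> 2" and "odd m"
  shows "L m n = 0"
proof -
  define u where "u = replicate (n - 1) (0::int) @ [1]"
  have "u \<in> tuples m n"
    using assms by (auto simp: u_def tuples_def)
  moreover have "ducci m ` tuples m n \<subseteq> tuples m n"
    using ducci_in_tuples \<open>m \<ge> 2\<close> by auto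
  ultimately obtain k where "k > 0" "(ducci m ^^ k) u = u"
    using inj_on_self_map_periodic[OF finite_tuples inj_on_ducci_tuples] assms by metis
  then show ?thesis
    unfolding L_def u_def[symmetric] by (intro Len_eq_0_if_periodic) auto
qed

end
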